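(* Every Gauss sequence is an Euler–Gauss sequence. That is, if $(a_n)_{n\ge1}$ is an integer sequence satisfying $\sum_{d\mid n}\mu(d)\,a_{n/d}\equiv 0 \pmod n$ for all $n\ge1$, then $A_n^+\equiv A_n^-\pmod n$ for all $n\ge 1$.
   Context: $\mu$ is the Möbius function. For an integer sequence $(a_n)_{n\ge1}$ and $n\ge1$, $A_n^+=\prod_{d\mid n,\ \mu(d)=1} a_{n/d}$ and $A_n^-=\prod_{d\mid n,\ \mu(d)=-1} a_{n/d}$ (empty products equal $1$). A Gauss sequence is an integer sequence with $\sum_{d\mid n}\mu(d)a_{n/d}\equiv0\pmod n$ for all $n\ge1$; an Euler–Gauss sequence is an integer sequence with $A_n^+\equiv A_n^-\pmod n$ for all $n\ge1$. *)

theory Defs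
  imports "HOL-Computational_Algebra.Computational_Algebra" "HOL-Number_Theory.Number_Theory"
begin

definition moebius_mu :: "nat \<Rightarrow> int" where
  "moebius_mu n = (if n = 0 \<or> \<not> squarefree n then 0 else (-1) ^ card (prime_factors n))"

definition A_plus :: "(nat \<Rightarrow> int) \<Rightarrow> nat \<Rightarrow> int" where
  "A_plus a n = (\<Prod>d \<in> {d. d dvd n \<and> moebius_mu d = 1}. a (n div d))"

definition A_minus :: "(nat \<Rightarrow> int) \<Rightarrow> nat \<Rightarrow> int" where
  "A_minus a n = (\<Prod>d \<in> {d. d dvd n \<and> moebius_mu d = -1}. a (n div d))"

definition gauss_seq :: "(nat \<Rightarrow> int) \<Rightarrow> bool" where
  "gauss_seq a \<longleftrightarrow> (\<forall>n\<ge>1. [(\<Sum>d | d dvd n. moebius_mu d * a (n div d)) = 0] (mod int n))"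

definition euler_gauss_seq :: "(nat \<Rightarrow> int) \<Rightarrow> bool" where
  "euler_gauss_seq a \<longleftrightarrow> (\<forall>n\<ge>1. [A_plus a n = A_minus a n] (mod int n))"

end

theory Submission
  imports Defs
begin

text \<open>
  Fix a prime \<open>p\<close> and write \<open>n = p\<^sup>k m\<close> with \<open>p\<close> not dividing \<open>m\<close>. The
  squarefree divisors of \<open>n\<close> are the \<open>e\<close> and \<open>p e\<close> with \<open>e\<close> a squarefree divisor
  of \<open>m\<close>, and \<open>\<mu>(p e) = -\<mu>(e)\<close>. Hence the Gauss condition at \<open>p\<^sup>k m\<close> says that
  the Moebius transform of \<open>m \<mapsto> a(p\<^sup>k m) - a(p\<^sup>k\<^sup>-\<^sup>1 m)\<close> vanishes modulo \<open>p\<^sup>k\<close>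
  on all \<open>m\<close> prime to \<open>p\<close>, and inverting it (by induction on \<open>m\<close>) gives
  \<open>a(p\<^sup>k m) \<equiv> a(p\<^sup>k\<^sup>-\<^sup>1 m) (mod p\<^sup>k)\<close>. The same splitting pairs every factor
  \<open>a(n/e)\<close> of \<open>A\<^sup>+\<^sub>n\<close> with the factor \<open>a(n/(p e))\<close> of \<open>A\<^sup>-\<^sub>n\<close> and vice
  versa, so \<open>A\<^sup>+\<^sub>n \<equiv> A\<^sup>-\<^sub>n\<close> modulo every prime power exactly dividing \<open>n\<close>,
  hence modulo \<open>n\<close>.
\<close>

lemma moebius_mu_cases: "moebius_mu d = 0 \<or> moebius_mu d = 1 \<or> moebius_mu d = -1"
  unfolding moebius_mu_def by (auto simp: minus_one_power_iff)

lemma moebius_mu_eq_0_iff: "moebius_mu d = 0 \<longleftrightarrow> d = 0 \<or> \<not> squarefree d"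
  unfolding moebius_mu_def by auto

lemma moebius_mu_1 [simp]: "moebius_mu 1 = 1"
  unfolding moebius_mu_def by auto

lemma moebius_mu_prime_mult:
  assumes p: "prime (p::nat)" and "\<not> p dvd e"
  shows "moebius_mu (p * e) = - moebius_mu e"
proof -
  have "e > 0" using \<open>\<not> p dvd e\<close> by (metis dvd_0_right gr0I)
  have "coprime p e" using assms by (simp add: prime_imp_coprime)
  hence "squarefree (p * e) \<longleftrightarrow> squarefree e"
    using squarefree_mult_coprime squarefree_prime[OF p] squarefree_multD(2) by blast
  moreover have "prime_factors (p * e) = insert p (prime_factors e)"
    using prime_factors_product[of p e] p \<open>e > 0\<close> prime_prime_factors[OF p] by auto
  moreover have "p \<notin> prime_factors e" using \<open>\<not> p dvd e\<close> by auto
  ultimately show ?thesis using \<open>e > 0\<close> p unfolding moebius_mu_def by auto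
qed

definition mu_divisors :: "nat \<Rightarrow> int \<Rightarrow> nat set" where
  "mu_divisors n s = {d. d dvd n \<and> moebius_mu d = s}"

lemma finite_mu_divisors: "n > 0 \<Longrightarrow> finite (mu_divisors n s)"
  unfolding mu_divisors_def by (rule finite_subset[of _ "{..n}"]) (auto dest: dvd_imp_le)

lemma sum_moebius_mu_eq_diff:
  fixes g :: "nat \<Rightarrow> int"
  assumes "n > 0"
  shows "(\<Sum>d | d dvd n. moebius_mu d * g d) = sum g (mu_divisors n 1) - sum g (mu_divisors n (-1))"
proof -
  have fin: "finite {d. d dvd n}" using assms by simp
  have "(\<Sum>d | d dvd n. moebius_mu d * g d) =
      (\<Sum>d | d dvd n. (if moebius_mu d = 1 then g d else 0) - (if moebius_mu d = -1 then g d else 0))"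
    by (rule sum.cong) (use moebius_mu_cases in auto)
  also have "\<dots> = sum g (mu_divisors n 1) - sum g (mu_divisors n (-1))"
    using fin by (simp add: sum_subtractf sum.inter_filter[symmetric] mu_divisors_def conj_commute)
  finally show ?thesis .
qed

lemma mu_divisors_prime_power_mult_eq:
  assumes p: "prime (p::nat)" and "k \<ge> 1" and m: "\<not> p dvd m" and "s \<noteq> 0"
  shows "mu_divisors (p ^ k * m) s = mu_divisors m s \<union> (*) p ` mu_divisors m (-s)"
proof (intro equalityI subsetI)
  fix d assume "d \<in> mu_divisors (p ^ k * m) s"
  hence d: "d dvd p ^ k * m" "moebius_mu d = s" unfolding mu_divisors_def by auto
  hence "squarefree d" using \<open>s \<noteq> 0\<close> moebius_mu_eq_0_iff by metis
  show "d \<in> mu_divisors m s \<union> (*) p ` mu_divisors m (-s)"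
  proof (cases "p dvd d")
    case False
    hence "coprime d (p ^ k)" using p by (metis prime_imp_coprime coprime_commute coprime_power_right_iff)
    hence "d dvd m" using d by (simp add: coprime_dvd_mult_right_iff)
    thus ?thesis using d unfolding mu_divisors_def by auto
  next
    case True
    then obtain e where de: "d = p * e" by blast
    have "\<not> p dvd e"
    proof
      assume "p dvd e"
      hence "p ^ 2 dvd d" using de by (auto simp: power2_eq_square)
      with \<open>squarefree d\<close> have "p dvd 1" by (rule squarefreeD)
      thus False using p by simp
    qed
    hence "moebius_mu e = -s" using moebius_mu_prime_mult[OF p] d de by simp
    have "p ^ k * m = p * (p ^ (k - 1) * m)" using \<open>k \<ge> 1\<close> by (cases k) simp_all
    hence "p * e dvd p * (p ^ (k - 1) * m)" using d de by metis
    hence "e dvd p ^ (k - 1) * m" using p by (simp add: prime_gt_0_nat)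
    moreover have "coprime e (p ^ (k - 1))"
      using \<open>\<not> p dvd e\<close> p by (metis prime_imp_coprime coprime_commute coprime_power_right_iff)
    ultimately have "e dvd m" by (simp add: coprime_dvd_mult_right_iff)
    thus ?thesis using \<open>moebius_mu e = -s\<close> de unfolding mu_divisors_def by auto
  qed
next
  fix d assume "d \<in> mu_divisors m s \<union> (*) p ` mu_divisors m (-s)"
  thus "d \<in> mu_divisors (p ^ k * m) s"
  proof
    assume "d \<in> mu_divisors m s" thus ?thesis unfolding mu_divisors_def by auto
  next
    assume "d \<in> (*) p ` mu_divisors m (-s)"
    then obtain e where de: "d = p * e" and e: "e dvd m" "moebius_mu e = -s"
      unfolding mu_divisors_def by auto
    have "\<not> p dvd e" using e m dvd_trans by blast
    hence "moebius_mu d = s" using moebius_mu_prime_mult[OF p] e de by simp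
    moreover have "p * e dvd p ^ k * m" using e \<open>k \<ge> 1\<close> by (intro mult_dvd_mono) (auto simp: dvd_power)
    ultimately show ?thesis using de unfolding mu_divisors_def by auto
  qed
qed

lemma mu_divisors_disjoint_image:
  "\<not> (p::nat) dvd m \<Longrightarrow> mu_divisors m s \<inter> (*) p ` mu_divisors m t = {}"
  unfolding mu_divisors_def using dvd_trans by fastforce

context comm_monoid_set
begin

lemma mu_divisors_prime_power_mult:
  assumes p: "prime p" and "k \<ge> 1" "\<not> p dvd m" "m > 0" "s \<noteq> 0"
  shows "F g (mu_divisors (p ^ k * m) s) = F g (mu_divisors m s) \<^bold>* F (\<lambda>e. g (p * e)) (mu_divisors m (-s))"
proof -
  have "inj_on ((*) p) A" for A using p by (auto simp: inj_on_def prime_gt_0_nat)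
  thus ?thesis
    using assms by (simp add: mu_divisors_prime_power_mult_eq union_disjoint finite_mu_divisors
        mu_divisors_disjoint_image reindex)
qed

end

lemma sum_moebius_prime_power_mult:
  fixes f :: "nat \<Rightarrow> int"
  assumes "prime p" "k \<ge> 1" "\<not> p dvd m" "m > 0"
  shows "(\<Sum>d | d dvd p ^ k * m. moebius_mu d * f d) = (\<Sum>e | e dvd m. moebius_mu e * (f e - f (p * e)))"
  using assms
  by (simp add: sum_moebius_mu_eq_diff prime_gt_0_nat sum.mu_divisors_prime_power_mult sum_subtractf)

lemma prime_power_mult_div:
  assumes "e dvd (m::nat)" "k \<ge> 1" "p > 0"
  shows "p ^ k * m div e = p ^ k * (m div e)" "p ^ k * m div (p * e) = p ^ (k - 1) * (m div e)"
proof -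
  obtain c where c: "m = e * c" using assms(1) by blast
  obtain j where "k = Suc j" using assms(2) by (cases k) auto
  with c assms(3) show "p ^ k * m div e = p ^ k * (m div e)" "p ^ k * m div (p * e) = p ^ (k - 1) * (m div e)"
    by (cases "e = 0"; simp add: ac_simps)+
qed

text \<open>Moebius inversion modulo \<open>q\<close>, on any divisor-closed set of positive integers.\<close>

lemma dvd_if_dvd_moebius_sums:
  fixes c :: "nat \<Rightarrow> int"
  assumes sums: "\<And>m. m > 0 \<Longrightarrow> P m \<Longrightarrow> q dvd (\<Sum>e | e dvd m. moebius_mu e * c (m div e))"
    and P_dvd: "\<And>m d. P m \<Longrightarrow> d dvd m \<Longrightarrow> P d"
    and "m > 0" "P m"
  shows "q dvd c m"
  using \<open>m > 0\<close> \<open>P m\<close>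
proof (induction m rule: less_induct)
  case (less m)
  have "(\<Sum>e | e dvd m. moebius_mu e * c (m div e)) =
      c m + (\<Sum>e \<in> {e. e dvd m} - {1}. moebius_mu e * c (m div e))"
    using less.prems by (subst sum.remove[of _ 1]) (auto simp del: One_nat_def)
  moreover have "q dvd (\<Sum>e \<in> {e. e dvd m} - {1}. moebius_mu e * c (m div e))"
  proof (rule dvd_sum)
    fix e assume e: "e \<in> {e. e dvd m} - {1}"
    then obtain d where m: "m = e * d" by blast
    hence "d > 0" "e > 1" using e less.prems(1) by (auto intro!: Nat.gr0I)
    hence "d < m" "m div e = d" using m by auto
    moreover have "P d" using less.prems(2) m P_dvd by simp
    ultimately show "q dvd moebius_mu e * c (m div e)" using less.IH \<open>d > 0\<close> by simp
  qed
  ultimately show ?case using sums[OF less.prems] by (simp add: dvd_add_left_iff)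
qed

lemma gauss_seq_prime_power_cong:
  assumes a: "gauss_seq a" and p: "prime p" and k: "k \<ge> 1" and "m > 0" "\<not> p dvd m"
  shows "[a (p ^ k * m) = a (p ^ (k - 1) * m)] (mod int (p ^ k))"
proof -
  have "int (p ^ k) dvd a (p ^ k * m) - a (p ^ (k - 1) * m)"
  proof (rule dvd_if_dvd_moebius_sums
      [where P = "\<lambda>m. \<not> p dvd m" and c = "\<lambda>m. a (p ^ k * m) - a (p ^ (k - 1) * m)"])
    fix m assume m: "m > 0" "\<not> p dvd m"
    have "(\<Sum>e | e dvd m. moebius_mu e * (a (p ^ k * (m div e)) - a (p ^ (k - 1) * (m div e)))) =
        (\<Sum>d | d dvd p ^ k * m. moebius_mu d * a (p ^ k * m div d))"
      using m p k by (simp add: sum_moebius_prime_power_mult prime_power_mult_div prime_gt_0_nat)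
    also have "int (p ^ k) dvd \<dots>"
    proof -
      have "p ^ k * m \<ge> 1" using m p by (simp add: prime_gt_0_nat Suc_le_eq)
      with a have "[(\<Sum>d | d dvd p ^ k * m. moebius_mu d * a (p ^ k * m div d)) = 0] (mod int (p ^ k * m))"
        unfolding gauss_seq_def by blast
      thus ?thesis by (metis cong_0_iff dvd_mult_left of_nat_mult)
    qed
    finally show "int (p ^ k) dvd (\<Sum>e | e dvd m. moebius_mu e *
        (a (p ^ k * (m div e)) - a (p ^ (k - 1) * (m div e))))" .
  qed (use assms in auto)
  thus ?thesis by (simp add: cong_iff_dvd_diff)
qed

lemma euler_gauss_cong_prime_power:
  assumes a: "gauss_seq a" and p: "prime p" and "\<not> p dvd m" "m > 0"
  shows "[A_plus a (p ^ k * m) = A_minus a (p ^ k * m)] (mod int (p ^ k))"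
proof (cases "k = 0")
  case False
  hence k: "k \<ge> 1" by simp
  define n where "n = p ^ k * m"
  define P where "P s = (\<Prod>e\<in>mu_divisors m s. a (n div e))" for s
  define Q where "Q s = (\<Prod>e\<in>mu_divisors m s. a (n div (p * e)))" for s
  have "A_plus a n = P 1 * Q (-1)" "A_minus a n = P (-1) * Q 1"
    unfolding A_plus_def A_minus_def P_def Q_def n_def mu_divisors_def[symmetric]
    using assms k by (simp_all add: prod.mu_divisors_prime_power_mult)
  moreover have "[P s = Q s] (mod int (p ^ k))" for s
    unfolding P_def Q_def
  proof (rule cong_prod)
    fix e assume "e \<in> mu_divisors m s"
    then obtain d where m: "m = e * d" unfolding mu_divisors_def by auto
    hence "d > 0" "\<not> p dvd d" "m div e = d" using assms by auto
    thus "[a (n div e) = a (n div (p * e))] (mod int (p ^ k))"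
      using gauss_seq_prime_power_cong[OF a p k] m p k
      by (simp add: n_def prime_power_mult_div prime_gt_0_nat)
  qed
  ultimately have "[A_plus a n = A_minus a n] (mod int (p ^ k))"
    by (metis cong_mult cong_sym mult.commute)
  thus ?thesis unfolding n_def .
qed simp

lemma dvd_if_prime_power_multiplicity_dvd:
  fixes x y :: "'a :: factorial_semiring"
  assumes "x \<noteq> 0" "\<And>p. prime p \<Longrightarrow> p ^ multiplicity p x dvd y"
  shows "x dvd y"
proof (cases "y = 0")
  case False
  with assms show ?thesis
    by (intro multiplicity_le_imp_dvd) (auto simp: power_dvd_iff_le_multiplicity not_prime_unit)
qed simp

theorem theorem1:
  fixes a :: "nat \<Rightarrow> int"
  assumes "gauss_seq a"
  shows "euler_gauss_seq a"
  unfolding euler_gauss_seq_def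
proof (intro allI impI)
  fix n :: nat assume "n \<ge> 1"
  have "n dvd nat \<bar>A_plus a n - A_minus a n\<bar>"
  proof (rule dvd_if_prime_power_multiplicity_dvd)
    fix p :: nat assume p: "prime p"
    obtain m where n: "n = p ^ multiplicity p n * m" and "\<not> p dvd m"
      using \<open>n \<ge> 1\<close> p by (metis multiplicity_decompose' not_prime_unit not_one_le_zero)
    hence "m > 0" using \<open>n \<ge> 1\<close> by (cases m) auto
    with euler_gauss_cong_prime_power[OF assms p \<open>\<not> p dvd m\<close>] n
    show "p ^ multiplicity p n dvd nat \<bar>A_plus a n - A_minus a n\<bar>"
      by (metis cong_iff_dvd_diff dvd_nat_abs_iff)
  qed (use \<open>n \<ge> 1\<close> in simp)
  thus "[A_plus a n = A_minus a n] (mod int n)" by (simp add: cong_iff_dvd_diff)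
qed

end
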